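(* Let $G$ be a bipartite graph with $n$ vertices and $m\ge 1$ edges. Then $$EE(G) \ge 2\cosh\left(\frac{R_{1/2}}{m}\right) + (n-2),$$ with equality if and only if $G\cong K_{p,q}\cup (n-p-q)K_1$ for some $p,q\ge 1$ with $p+q\le n$.
   Context: All graphs are finite, simple and undirected. For a graph $G$ with adjacency matrix $A(G)$ having eigenvalues $\lambda_1\ge\cdots\ge\lambda_n$, the Estrada index is $EE(G)=\sum_{i=1}^n e^{\lambda_i}$. Writing $d(i)$ for the degree of vertex $i$ and $\mathcal{E}(G)$ for the edge set, $R_{1/2}(G)=\sum_{ij\in\mathcal{E}(G)}\sqrt{d(i)d(j)}$. $K_{p,q}$ is the complete bipartite graph with parts of sizes $p$ and $q$; $\cup$ denotes disjoint union and $rK_1$ denotes $r$ isolated vertices. *)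

theory Defs
  imports Complex_Main "Jordan_Normal_Form.Char_Poly"
begin

definition simple_graph :: "nat \<Rightarrow> (nat \<Rightarrow> nat \<Rightarrow> bool) \<Rightarrow> bool" where
  "simple_graph n E \<longleftrightarrow> (\<forall>i j. E i j \<longrightarrow> i < n \<and> j < n) \<and> (\<forall>i j. E i j \<longrightarrow> E j i) \<and> (\<forall>i. \<not> E i i)"

definition adj_mat :: "nat \<Rightarrow> (nat \<Rightarrow> nat \<Rightarrow> bool) \<Rightarrow> real mat" where
  "adj_mat n E = mat n n (\<lambda>(i,j). if E i j then 1 else 0)"

text \<open>Estrada index: sum of exp over the eigenvalues (with multiplicity) of the adjacency matrix,
  i.e. over a list of reals es with char_poly A = prod (x - lambda).\<close>
definition estrada_index :: "nat \<Rightarrow> (nat \<Rightarrow> nat \<Rightarrow> bool) \<Rightarrow> real" where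
  "estrada_index n E = (SOME s. \<exists>es :: real list.
      char_poly (adj_mat n E) = (\<Prod>a\<leftarrow>es. [:- a, 1:]) \<and> s = (\<Sum>a\<leftarrow>es. exp a))"

definition degree :: "nat \<Rightarrow> (nat \<Rightarrow> nat \<Rightarrow> bool) \<Rightarrow> nat \<Rightarrow> nat" where
  "degree n E i = card {j. j < n \<and> E i j}"

definition edge_set :: "nat \<Rightarrow> (nat \<Rightarrow> nat \<Rightarrow> bool) \<Rightarrow> (nat \<times> nat) set" where
  "edge_set n E = {(i,j). i < j \<and> j < n \<and> E i j}"

definition num_edges :: "nat \<Rightarrow> (nat \<Rightarrow> nat \<Rightarrow> bool) \<Rightarrow> nat" where
  "num_edges n E = card (edge_set n E)"

definition R_half :: "nat \<Rightarrow> (nat \<Rightarrow> nat \<Rightarrow> bool) \<Rightarrow> real" where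
  "R_half n E = (\<Sum>(i,j)\<in>edge_set n E. sqrt (real (degree n E i * degree n E j)))"

definition bipartite :: "nat \<Rightarrow> (nat \<Rightarrow> nat \<Rightarrow> bool) \<Rightarrow> bool" where
  "bipartite n E \<longleftrightarrow> (\<exists>S. \<forall>i j. E i j \<longrightarrow> (i \<in> S \<longleftrightarrow> j \<notin> S))"

text \<open>G is isomorphic to K_{p,q} together with n-p-q isolated vertices, for some p,q \<ge> 1:
  there are disjoint nonempty vertex sets P, Q whose cross pairs are exactly the edges.\<close>
definition complete_bipartite_plus_isolated :: "nat \<Rightarrow> (nat \<Rightarrow> nat \<Rightarrow> bool) \<Rightarrow> bool" where
  "complete_bipartite_plus_isolated n E \<longleftrightarrow> (\<exists>P Q. P \<subseteq> {0..<n} \<and> Q \<subseteq> {0..<n} \<and> P \<inter> Q = {}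
      \<and> card P \<ge> 1 \<and> card Q \<ge> 1
      \<and> (\<forall>i j. E i j \<longleftrightarrow> (i \<in> P \<and> j \<in> Q) \<or> (i \<in> Q \<and> j \<in> P)))"

end

theory Submission
  imports Defs "Jordan_Normal_Form.Schur_Decomposition"
begin

text \<open>Write \<open>EE(G) = \<Sum>\<^sub>k tr(A\<^sup>k)/k!\<close> and bound each trace. A bipartition
  gives a diagonal sign matrix conjugating \<open>A\<close> to \<open>-A\<close>, so odd traces vanish. Let \<open>x\<close> be the
  vector of square roots of the degrees and \<open>y\<close> its copy with the signs of one side flipped:
  \<open>x\<close> and \<open>y\<close> are orthogonal of squared length \<open>2m\<close> and \<open>\<parallel>A\<^sup>jy\<parallel> = \<parallel>A\<^sup>jx\<parallel>\<close>, so Bessel's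
  inequality applied to the rows of \<open>A\<^sup>j\<close> gives \<open>tr(A\<^sup>2\<^sup>j) \<ge> 2\<parallel>A\<^sup>jx\<parallel>\<^sup>2/2m\<close>. The sequence
  \<open>\<parallel>A\<^sup>jx\<parallel>\<^sup>2\<close> is log-convex, hence at least \<open>2m \<rho>\<^sup>2\<^sup>j\<close> for the Rayleigh quotient
  \<open>\<rho> = x\<^sup>TAx/\<parallel>x\<parallel>\<^sup>2 = R\<^sub>1\<^sub>/\<^sub>2/m\<close>. Summing the series gives \<open>2 cosh \<rho> + n - 2\<close>.
  Equality already at \<open>k = 2\<close> forces every row of \<open>A\<close> into the span of \<open>x\<close> and \<open>y\<close>, which makes
  all non-isolated vertices on one side adjacent to all on the other; conversely
  \<open>K\<^sub>p\<^sub>,\<^sub>q\<close> satisfies \<open>A\<^sup>3 = pq A\<close>, so its traces are exactly \<open>\<rho>\<^sup>k + (-\<rho>)\<^sup>k\<close> with \<open>\<rho> = \<surd>(pq)\<close>.\<close>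

section \<open>Eigenvalues and traces of real symmetric matrices\<close>

lemma real_symmetric_eigenvalue_real:
  fixes A :: "real mat"
  assumes A: "A \<in> carrier_mat n n" and sym: "\<And>i j. i < n \<Longrightarrow> j < n \<Longrightarrow> A $$ (i,j) = A $$ (j,i)"
    and ev: "eigenvalue (map_mat complex_of_real A) a"
  shows "Im a = 0"
proof -
  define Ac where "Ac = map_mat complex_of_real A"
  obtain v where v: "v \<in> carrier_vec n" "v \<noteq> 0\<^sub>v n" "Ac *\<^sub>v v = a \<cdot>\<^sub>v v"
    using ev A unfolding eigenvalue_def eigenvector_def Ac_def by auto
  have row: "(\<Sum>j<n. complex_of_real (A $$ (i,j)) * v $ j) = a * v $ i" if "i < n" for i
  proof -
    have "(Ac *\<^sub>v v) $ i = (\<Sum>j<n. complex_of_real (A $$ (i,j)) * v $ j)"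
      using that A v(1) unfolding Ac_def
      by (auto simp: scalar_prod_def lessThan_atLeast0 intro!: sum.cong)
    with v(3) that v(1) show ?thesis by (metis index_smult_vec(1) carrier_vecD)
  qed
  text \<open>The quadratic form \<open>s = v\<^sup>* A v\<close> is real because \<open>A\<close> is real symmetric,
    and it equals \<open>a \<parallel>v\<parallel>\<^sup>2\<close>.\<close>
  define s where "s = (\<Sum>i<n. \<Sum>j<n. cnj (v $ i) * complex_of_real (A $$ (i,j)) * v $ j)"
  define T where "T = (\<Sum>i<n. (cmod (v $ i))\<^sup>2)"
  have "s = (\<Sum>i<n. cnj (v $ i) * (\<Sum>j<n. complex_of_real (A $$ (i,j)) * v $ j))"
    unfolding s_def by (simp add: sum_distrib_left mult.assoc)
  also have "\<dots> = (\<Sum>i<n. a * (cnj (v $ i) * v $ i))"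
    by (rule sum.cong) (auto simp: row)
  also have "\<dots> = a * (\<Sum>i<n. cnj (v $ i) * v $ i)"
    by (simp add: sum_distrib_left)
  also have "(\<Sum>i<n. cnj (v $ i) * v $ i) = complex_of_real T"
    unfolding T_def by (simp add: complex_norm_square mult.commute del: of_real_power)
  finally have s: "s = a * complex_of_real T" .
  have "cnj s = (\<Sum>i<n. \<Sum>j<n. v $ i * complex_of_real (A $$ (i,j)) * cnj (v $ j))"
    unfolding s_def by simp
  also have "\<dots> = (\<Sum>j<n. \<Sum>i<n. v $ i * complex_of_real (A $$ (i,j)) * cnj (v $ j))"
    by (rule sum.swap)
  also have "\<dots> = s" unfolding s_def
    by (auto intro!: sum.cong simp: sym mult.commute mult.left_commute)
  finally have "Im s = 0" by (simp add: complex_eq_iff)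
  obtain i where i: "i < n" "v $ i \<noteq> 0"
  proof (rule ccontr)
    assume "\<not> thesis"
    then have "v = 0\<^sub>v n" using v(1) that by (intro eq_vecI) auto
    with v(2) show False by simp
  qed
  have "T > 0" unfolding T_def by (rule sum_pos2[of _ i]) (use i in auto)
  with \<open>Im s = 0\<close> show ?thesis unfolding s by simp
qed

lemma real_symmetric_char_poly_splits:
  fixes A :: "real mat"
  assumes A: "A \<in> carrier_mat n n" and sym: "\<And>i j. i < n \<Longrightarrow> j < n \<Longrightarrow> A $$ (i,j) = A $$ (j,i)"
  shows "\<exists>es. char_poly A = (\<Prod>a\<leftarrow>es. [:- a, 1:])"
proof -
  define Ac where "Ac = map_mat complex_of_real A"
  have Ac: "Ac \<in> carrier_mat n n" using A by (simp add: Ac_def)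
  obtain as where as: "char_poly Ac = (\<Prod>a\<leftarrow>as. [:- a, 1:])"
    using char_poly_factorized[OF Ac] by blast
  have "Im a = 0" if "a \<in> set as" for a
  proof (rule real_symmetric_eigenvalue_real[OF A sym])
    have "poly (char_poly Ac) a = 0" unfolding as using that
      by (induct as) (auto simp: poly_prod_list)
    then show "eigenvalue (map_mat complex_of_real A) a"
      using eigenvalue_root_char_poly[OF Ac] by (simp add: Ac_def)
  qed
  then have as_real: "map complex_of_real (map Re as) = as"
    by (induct as) (auto simp: complex_eq_iff)
  interpret h: map_poly_inj_comm_ring_hom complex_of_real ..
  have "map_poly complex_of_real (char_poly A) = char_poly Ac"
    unfolding Ac_def by (rule of_real_hom.char_poly_hom[OF A, symmetric])
  also have "\<dots> = (\<Prod>a\<leftarrow>map complex_of_real (map Re as). [:- a, 1:])"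
    unfolding as as_real ..
  also have "\<dots> = map_poly complex_of_real (\<Prod>a\<leftarrow>map Re as. [:- a, 1:])"
    by (simp add: h.hom_prod_list o_def)
  finally show ?thesis by (blast dest: h.injectivity)
qed

lemma index_mult_mat_sum:
  fixes A B :: "'a :: comm_semiring_0 mat"
  assumes "A \<in> carrier_mat n m" "B \<in> carrier_mat m k" "i < n" "j < k"
  shows "(A * B) $$ (i,j) = (\<Sum>l<m. A $$ (i,l) * B $$ (l,j))"
  using assms by (auto simp: scalar_prod_def lessThan_atLeast0 intro!: sum.cong)

lemma diag_sum_similar:
  fixes P C Q :: "'a :: comm_semiring_1 mat"
  assumes P: "P \<in> carrier_mat n n" and C: "C \<in> carrier_mat n n" and Q: "Q \<in> carrier_mat n n"
    and QP: "Q * P = 1\<^sub>m n"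
  shows "(\<Sum>i<n. (P * C * Q) $$ (i,i)) = (\<Sum>i<n. C $$ (i,i))"
proof -
  have PC: "P * C \<in> carrier_mat n n" using P C by simp
  have "(\<Sum>i<n. (P * C * Q) $$ (i,i)) = (\<Sum>i<n. \<Sum>l<n. \<Sum>j<n. P $$ (i,j) * C $$ (j,l) * Q $$ (l,i))"
    using P C Q
    by (intro sum.cong refl)
      (simp add: index_mult_mat_sum[OF PC Q] index_mult_mat_sum[OF P C] sum_distrib_right del: index_mult_mat assoc_mult_mat)
  also have "\<dots> = (\<Sum>l<n. \<Sum>i<n. \<Sum>j<n. P $$ (i,j) * C $$ (j,l) * Q $$ (l,i))"
    by (rule sum.swap)
  also have "\<dots> = (\<Sum>l<n. \<Sum>j<n. \<Sum>i<n. P $$ (i,j) * C $$ (j,l) * Q $$ (l,i))"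
    by (intro sum.cong refl sum.swap)
  also have "\<dots> = (\<Sum>j<n. \<Sum>l<n. \<Sum>i<n. P $$ (i,j) * C $$ (j,l) * Q $$ (l,i))"
    by (rule sum.swap)
  also have "\<dots> = (\<Sum>j<n. \<Sum>l<n. C $$ (j,l) * (Q * P) $$ (l,j))"
    using P Q by (intro sum.cong refl) (simp add: index_mult_mat_sum[OF Q P] sum_distrib_left mult_ac del: index_mult_mat)
  also have "\<dots> = (\<Sum>j<n. C $$ (j,j))"
    by (simp add: QP if_distrib[of "\<lambda>x. _ * x"] cong: if_cong)
  finally show ?thesis .
qed

lemma upper_triangular_pow_mat:
  fixes B :: "'a :: comm_semiring_1 mat"
  assumes B: "B \<in> carrier_mat n n" and ut: "upper_triangular B"
  shows "upper_triangular (B ^\<^sub>m k) \<and> (\<forall>i<n. (B ^\<^sub>m k) $$ (i,i) = (B $$ (i,i))^k)"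
proof (induct k)
  case 0
  then show ?case using B by auto
next
  case (Suc k)
  have Bk: "B ^\<^sub>m k \<in> carrier_mat n n" using B by simp
  have below: "(B ^\<^sub>m k) $$ (i,l) * B $$ (l,j) = 0" if "i < n" "l < n" "j < n" "j \<le> i" "l \<noteq> i \<or> j < i" for i l j
  proof (cases "l < i")
    case True
    then show ?thesis using Suc Bk that upper_triangularD[of "B ^\<^sub>m k" l i] B by simp
  next
    case False
    then have "B $$ (l,j) = 0" using ut B that by (intro upper_triangularD) auto
    then show ?thesis by simp
  qed
  have entry: "(B ^\<^sub>m Suc k) $$ (i,j) = (\<Sum>l<n. (B ^\<^sub>m k) $$ (i,l) * B $$ (l,j))" if "i < n" "j < n" for i j
    using that by (simp del: index_mult_mat add: index_mult_mat_sum[OF Bk B])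
  have "(B ^\<^sub>m Suc k) $$ (i,j) = 0" if "j < i" "i < n" for i j
  proof -
    have "(B ^\<^sub>m Suc k) $$ (i,j) = (\<Sum>l<n. (B ^\<^sub>m k) $$ (i,l) * B $$ (l,j))"
      using that by (intro entry) auto
    also have "\<dots> = 0" using that by (intro sum.neutral ballI below) auto
    finally show ?thesis .
  qed
  moreover have "(B ^\<^sub>m Suc k) $$ (i,i) = (B $$ (i,i))^Suc k" if "i < n" for i
  proof -
    have "(B ^\<^sub>m Suc k) $$ (i,i) = (\<Sum>l<n. (B ^\<^sub>m k) $$ (i,l) * B $$ (l,i))"
      using that by (intro entry)
    also have "\<dots> = (B ^\<^sub>m k) $$ (i,i) * B $$ (i,i)
        + (\<Sum>l\<in>{..<n}-{i}. (B ^\<^sub>m k) $$ (i,l) * B $$ (l,i))"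
      using that by (intro sum.remove) auto
    also have "(\<Sum>l\<in>{..<n}-{i}. (B ^\<^sub>m k) $$ (i,l) * B $$ (l,i)) = 0"
      using that by (intro sum.neutral ballI below) auto
    finally show ?thesis using Suc that by (simp add: mult.commute)
  qed
  ultimately show ?case using B by auto
qed

lemma power_sum_eigenvalues_eq_trace:
  fixes A :: "real mat"
  assumes A: "A \<in> carrier_mat n n" and cp: "char_poly A = (\<Prod>a\<leftarrow>es. [:- a, 1:])"
  shows "(\<Sum>e\<leftarrow>es. e^k) = (\<Sum>i<n. (A ^\<^sub>m k) $$ (i,i))"
proof -
  obtain B P Q where "schur_decomposition A es = (B,P,Q)" by (metis prod_cases3)
  from schur_decomposition[OF A cp this]
  have wit: "similar_mat_wit A B P Q" and ut: "upper_triangular B" and dg: "diag_mat B = es" by blast+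
  note carriers = similar_mat_witD2(5-7)[OF A wit]
  have "(\<Sum>i<n. (A ^\<^sub>m k) $$ (i,i)) = (\<Sum>i<n. (P * B ^\<^sub>m k * Q) $$ (i,i))"
    by (simp add: similar_mat_wit_pow_id[OF wit])
  also have "\<dots> = (\<Sum>i<n. (B ^\<^sub>m k) $$ (i,i))"
    using carriers similar_mat_witD2(2)[OF A wit] by (intro diag_sum_similar) auto
  also have "\<dots> = (\<Sum>i<n. (B $$ (i,i))^k)"
    using upper_triangular_pow_mat[OF carriers(1) ut, of k] by simp
  also have "\<dots> = (\<Sum>e\<leftarrow>es. e^k)"
    unfolding dg[symmetric] diag_mat_def using carriers(1)
    by (simp add: sum_list_distinct_conv_sum_set atLeast0LessThan o_def)
  finally show ?thesis by simp
qed

lemma sum_square_three_terms: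
  fixes v u y :: "'i \<Rightarrow> real"
  shows "(\<Sum>l\<in>I. (\<alpha> * v l - \<beta> * u l - \<gamma> * y l)\<^sup>2) =
    \<alpha>\<^sup>2 * (\<Sum>l\<in>I. (v l)\<^sup>2) + \<beta>\<^sup>2 * (\<Sum>l\<in>I. (u l)\<^sup>2) + \<gamma>\<^sup>2 * (\<Sum>l\<in>I. (y l)\<^sup>2)
    - 2 * \<alpha> * \<beta> * (\<Sum>l\<in>I. v l * u l) - 2 * \<alpha> * \<gamma> * (\<Sum>l\<in>I. v l * y l)
    + 2 * \<beta> * \<gamma> * (\<Sum>l\<in>I. u l * y l)"
proof -
  have "(\<Sum>l\<in>I. (\<alpha> * v l - \<beta> * u l - \<gamma> * y l)\<^sup>2) = (\<Sum>l\<in>I.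
    \<alpha>\<^sup>2 * (v l)\<^sup>2 + \<beta>\<^sup>2 * (u l)\<^sup>2 + \<gamma>\<^sup>2 * (y l)\<^sup>2
    - 2 * \<alpha> * \<beta> * (v l * u l) - 2 * \<alpha> * \<gamma> * (v l * y l) + 2 * \<beta> * \<gamma> * (u l * y l))"
    by (intro sum.cong refl) (simp add: power2_eq_square algebra_simps)
  then show ?thesis by (simp only: sum.distrib sum_subtractf sum_distrib_left)
qed

lemma Cauchy_Schwarz_sum:
  fixes u v :: "'i \<Rightarrow> real"
  assumes "finite I"
  shows "(\<Sum>l\<in>I. u l * v l)\<^sup>2 \<le> (\<Sum>l\<in>I. (u l)\<^sup>2) * (\<Sum>l\<in>I. (v l)\<^sup>2)"
proof -
  define M where "M = (\<Sum>l\<in>I. (u l)\<^sup>2)"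
  define c where "c = (\<Sum>l\<in>I. u l * v l)"
  show ?thesis
  proof (cases "M = 0")
    case True
    then have "\<forall>l\<in>I. u l = 0" unfolding M_def using \<open>finite I\<close> by (simp add: sum_nonneg_eq_0_iff)
    then have "c = 0" unfolding c_def by simp
    then show ?thesis using True by (simp add: M_def c_def)
  next
    case False
    moreover have "M \<ge> 0" unfolding M_def by (intro sum_nonneg) simp
    ultimately have "M > 0" by simp
    have "0 \<le> (\<Sum>l\<in>I. (M * v l - c * u l - 0 * u l)\<^sup>2)" by (intro sum_nonneg) auto
    also have "\<dots> = M * (M * (\<Sum>l\<in>I. (v l)\<^sup>2) - c\<^sup>2)"
      unfolding sum_square_three_terms by (simp add: M_def c_def power2_eq_square algebra_simps)
    finally show ?thesis using \<open>M > 0\<close> by (simp add: M_def c_def zero_le_mult_iff mult.commute)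
  qed
qed

lemma sum_square_minus_two_projections:
  fixes b x y :: "'i \<Rightarrow> real"
  assumes xx: "(\<Sum>l\<in>I. (x l)\<^sup>2) = M" and yy: "(\<Sum>l\<in>I. (y l)\<^sup>2) = M"
    and xy: "(\<Sum>l\<in>I. x l * y l) = 0" and "M > 0"
  shows "M * (\<Sum>l\<in>I. (b l)\<^sup>2) - (\<Sum>l\<in>I. b l * x l)\<^sup>2 - (\<Sum>l\<in>I. b l * y l)\<^sup>2
    = (\<Sum>l\<in>I. (M * b l - (\<Sum>l\<in>I. b l * x l) * x l - (\<Sum>l\<in>I. b l * y l) * y l)\<^sup>2) / M"
proof -
  define \<alpha> where "\<alpha> = (\<Sum>l\<in>I. b l * x l)"
  define \<beta> where "\<beta> = (\<Sum>l\<in>I. b l * y l)"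
  have "(\<Sum>l\<in>I. (M * b l - \<alpha> * x l - \<beta> * y l)\<^sup>2) = M * (M * (\<Sum>l\<in>I. (b l)\<^sup>2) - \<alpha>\<^sup>2 - \<beta>\<^sup>2)"
    unfolding sum_square_three_terms xx yy xy \<alpha>_def[symmetric] \<beta>_def[symmetric]
    by (simp add: power2_eq_square algebra_simps)
  with \<open>M > 0\<close> show ?thesis unfolding \<alpha>_def[symmetric] \<beta>_def[symmetric] by simp
qed

lemma log_convex_ge_geometric:
  fixes T :: "nat \<Rightarrow> real"
  assumes nonneg: "\<And>j. T j \<ge> 0" and T0: "T 0 > 0"
    and log_convex: "\<And>j. (T (Suc j))\<^sup>2 \<le> T j * T (Suc (Suc j))"
  shows "T k \<ge> T 0 * (T 1 / T 0)^k"
proof -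
  define r where "r = T 1 / T 0"
  have "r \<ge> 0" unfolding r_def using nonneg T0 by simp
  have ratio: "T (Suc j) \<ge> r * T j" for j
  proof (induct j)
    case 0
    then show ?case using T0 by (simp add: r_def)
  next
    case (Suc j)
    show ?case
    proof (cases "T (Suc j) = 0")
      case True
      then show ?thesis using nonneg by simp
    next
      case False
      then have pos: "T (Suc j) > 0" using nonneg[of "Suc j"] by simp
      have "T j \<noteq> 0"
      proof
        assume "T j = 0"
        with log_convex[of j] have "(T (Suc j))\<^sup>2 \<le> 0" by simp
        with pos show False by simp
      qed
      with nonneg[of j] have "T j > 0" by simp
      have "T j * (r * T (Suc j)) = T (Suc j) * (r * T j)" by (simp add: algebra_simps)
      also have "\<dots> \<le> T (Suc j) * T (Suc j)" using Suc pos by (intro mult_left_mono) auto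
      also have "\<dots> \<le> T j * T (Suc (Suc j))" using log_convex[of j] by (simp add: power2_eq_square)
      finally show ?thesis using \<open>T j > 0\<close> by simp
    qed
  qed
  have "T k \<ge> T 0 * r^k"
  proof (induct k)
    case (Suc k)
    have "T 0 * r ^ Suc k \<le> r * T k" using Suc \<open>r \<ge> 0\<close> by (simp add: mult_left_mono mult.left_commute)
    also have "\<dots> \<le> T (Suc k)" by (rule ratio)
    finally show ?case .
  qed simp
  then show ?thesis unfolding r_def .
qed

lemma exp_sums: "(\<lambda>k. x^k / fact k) sums exp (x::real)"
  using exp_converges[of x] by (simp add: divide_inverse_commute)

lemma exp_power_sums_sums: "(\<lambda>k. (\<Sum>e\<leftarrow>es. e^k) / fact k) sums (\<Sum>e\<leftarrow>es. exp (e::real))"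
proof (induct es)
  case (Cons e es)
  from sums_add[OF exp_sums Cons] show ?case by (simp add: add_divide_distrib)
qed simp

lemma sums_eq_iff_termwise_eq:
  fixes f g :: "nat \<Rightarrow> real"
  assumes le: "\<And>k. f k \<le> g k" and f: "f sums s" and g: "g sums t"
  shows "s = t \<longleftrightarrow> (\<forall>k. f k = g k)"
proof
  assume "s = t"
  then have "(\<lambda>k. g k - f k) sums 0" using sums_diff[OF g f] by simp
  then have "suminf (\<lambda>k. g k - f k) = 0" "summable (\<lambda>k. g k - f k)"
    by (auto simp: sums_iff)
  with le show "\<forall>k. f k = g k" by (subst (asm) suminf_eq_zero_iff) auto
next
  assume "\<forall>k. f k = g k"
  then show "s = t" using f g by (metis ext sums_unique2)
qed

section \<open>Powers of a matrix given by its entries\<close>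

fun mpow :: "nat \<Rightarrow> (nat \<Rightarrow> nat \<Rightarrow> 'a :: comm_semiring_1) \<Rightarrow> nat \<Rightarrow> nat \<Rightarrow> nat \<Rightarrow> 'a" where
  "mpow n a 0 i j = (if i = j then 1 else 0)"
| "mpow n a (Suc k) i j = (\<Sum>l<n. mpow n a k i l * a l j)"

definition mpow_vec :: "nat \<Rightarrow> (nat \<Rightarrow> nat \<Rightarrow> 'a :: comm_semiring_1) \<Rightarrow> nat \<Rightarrow> (nat \<Rightarrow> 'a) \<Rightarrow> nat \<Rightarrow> 'a" where
  "mpow_vec n a k x i = (\<Sum>l<n. mpow n a k i l * x l)"

definition rayleigh :: "nat \<Rightarrow> (nat \<Rightarrow> nat \<Rightarrow> real) \<Rightarrow> (nat \<Rightarrow> real) \<Rightarrow> real" where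
  "rayleigh n a x = (\<Sum>i<n. x i * (\<Sum>l<n. a i l * x l)) / (\<Sum>i<n. (x i)\<^sup>2)"

lemma mpow_add: "j < n \<Longrightarrow> mpow n a (p + q) i j = (\<Sum>l<n. mpow n a p i l * mpow n a q l j)"
proof (induct q arbitrary: j)
  case 0
  then show ?case by (simp add: if_distrib[of "\<lambda>x. _ * x"] cong: if_cong)
next
  case (Suc q)
  have "mpow n a (p + Suc q) i j = (\<Sum>l<n. (\<Sum>l'<n. mpow n a p i l' * mpow n a q l' l) * a l j)"
    using Suc.hyps by simp
  also have "\<dots> = (\<Sum>l<n. \<Sum>l'<n. mpow n a p i l' * (mpow n a q l' l * a l j))"
    by (simp add: sum_distrib_right mult.assoc)
  also have "\<dots> = (\<Sum>l'<n. \<Sum>l<n. mpow n a p i l' * (mpow n a q l' l * a l j))"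
    by (rule sum.swap)
  also have "\<dots> = (\<Sum>l'<n. mpow n a p i l' * mpow n a (Suc q) l' j)"
    by (simp add: sum_distrib_left)
  finally show ?case .
qed

lemma mpow_one: "i < n \<Longrightarrow> mpow n a 1 i j = a i j"
  by (simp add: if_distrib[of "\<lambda>x. x * _"] cong: if_cong)

lemma mpow_Suc_left: "i < n \<Longrightarrow> j < n \<Longrightarrow> mpow n a (Suc k) i j = (\<Sum>l<n. a i l * mpow n a k l j)"
  using mpow_add[of j n a 1 k i] mpow_one[of i n a] by (simp del: mpow.simps)

lemma mpow_vec_zero: "i < n \<Longrightarrow> mpow_vec n a 0 x i = x i"
  unfolding mpow_vec_def by (simp add: if_distrib[of "\<lambda>x. x * _"] cong: if_cong)

lemma mpow_vec_Suc: "i < n \<Longrightarrow> mpow_vec n a (Suc k) x i = (\<Sum>l<n. a i l * mpow_vec n a k x l)"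
proof -
  assume i: "i < n"
  have "mpow_vec n a (Suc k) x i = (\<Sum>l<n. \<Sum>l'<n. a i l' * (mpow n a k l' l * x l))"
    unfolding mpow_vec_def using i
    by (intro sum.cong refl) (simp add: mpow_Suc_left sum_distrib_right mult.assoc del: mpow.simps)
  also have "\<dots> = (\<Sum>l'<n. \<Sum>l<n. a i l' * (mpow n a k l' l * x l))" by (rule sum.swap)
  also have "\<dots> = (\<Sum>l<n. a i l * mpow_vec n a k x l)" unfolding mpow_vec_def by (simp add: sum_distrib_left)
  finally show ?thesis .
qed

lemma mpow_add_three:
  assumes cube: "\<And>l j. l < n \<Longrightarrow> j < n \<Longrightarrow> mpow n a 3 l j = c * a l j" and "j < n"
  shows "mpow n a (k + 3) i j = c * mpow n a (Suc k) i j"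
  using \<open>j < n\<close> by (simp add: mpow_add cube mult_ac del: mpow.simps(2)) (simp add: sum_distrib_left mult_ac)

locale symmetric_matrix =
  fixes a :: "nat \<Rightarrow> nat \<Rightarrow> real"
  assumes symmetric: "a i j = a j i"
begin

lemma mpow_symmetric: "i < n \<Longrightarrow> j < n \<Longrightarrow> mpow n a k i j = mpow n a k j i"
proof (induct k arbitrary: i j)
  case (Suc k)
  have "mpow n a (Suc k) i j = (\<Sum>l<n. a j l * mpow n a k l i)"
    using Suc by (auto simp: symmetric mult.commute intro!: sum.cong)
  also have "\<dots> = mpow n a (Suc k) j i" using mpow_Suc_left[of j n i a k] Suc by simp
  finally show ?case .
qed simp

lemma trace_mpow_double: "(\<Sum>i<n. mpow n a (k + k) i i) = (\<Sum>i<n. \<Sum>l<n. (mpow n a k i l)\<^sup>2)"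
  by (intro sum.cong refl) (auto simp: mpow_add power2_eq_square mpow_symmetric intro!: sum.cong)

lemma inner_mpow_vec_Suc:
  "(\<Sum>i<n. mpow_vec n a (Suc p) x i * mpow_vec n a q x i) = (\<Sum>i<n. mpow_vec n a p x i * mpow_vec n a (Suc q) x i)"
proof -
  have "(\<Sum>i<n. mpow_vec n a (Suc p) x i * mpow_vec n a q x i)
      = (\<Sum>i<n. \<Sum>l<n. mpow_vec n a p x l * (a l i * mpow_vec n a q x i))"
    by (intro sum.cong refl) (simp add: mpow_vec_Suc sum_distrib_left sum_distrib_right symmetric mult_ac)
  also have "\<dots> = (\<Sum>l<n. \<Sum>i<n. mpow_vec n a p x l * (a l i * mpow_vec n a q x i))" by (rule sum.swap)
  also have "\<dots> = (\<Sum>i<n. mpow_vec n a p x i * mpow_vec n a (Suc q) x i)"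
    by (intro sum.cong refl) (simp add: mpow_vec_Suc sum_distrib_left)
  finally show ?thesis .
qed

lemma inner_mpow_vec:
  "(\<Sum>i<n. mpow_vec n a p x i * mpow_vec n a q x i) = (\<Sum>i<n. x i * mpow_vec n a (p + q) x i)"
proof (induct p arbitrary: q)
  case 0
  then show ?case by (simp add: mpow_vec_zero)
next
  case (Suc p)
  then show ?case using inner_mpow_vec_Suc[where p=p and q=q and x=x] by simp
qed

text \<open>The squared norms \<open>\<parallel>A\<^sup>k x\<parallel>\<^sup>2 = \<langle>x, A\<^sup>2\<^sup>k x\<rangle>\<close> form a log-convex sequence by
  Cauchy--Schwarz.\<close>
lemma norm_mpow_vec_ge:
  assumes pos: "(\<Sum>i<n. (x i)\<^sup>2) > 0"
  shows "(\<Sum>i<n. (mpow_vec n a k x i)\<^sup>2) \<ge> (\<Sum>i<n. (x i)\<^sup>2) * rayleigh n a x ^ (2 * k)"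
proof -
  define T where "T j = (\<Sum>i<n. (mpow_vec n a j x i)\<^sup>2)" for j
  define M where "M = (\<Sum>i<n. (x i)\<^sup>2)"
  have T0: "T 0 = M" unfolding T_def M_def by (simp add: mpow_vec_zero)
  have nonneg: "T j \<ge> 0" for j unfolding T_def by (intro sum_nonneg) simp
  have inner_T: "(\<Sum>i<n. mpow_vec n a p x i * mpow_vec n a q x i) = T j" if "p + q = j + j" for p q j
    unfolding T_def power2_eq_square inner_mpow_vec that ..
  have "(T (Suc j))\<^sup>2 \<le> T j * T (Suc (Suc j))" for j
    using Cauchy_Schwarz_sum[of "{..<n}" "mpow_vec n a j x" "mpow_vec n a (Suc (Suc j)) x"]
      inner_T[of j "Suc (Suc j)" "Suc j"] unfolding T_def by simp
  then have "T k \<ge> T 0 * (T 1 / T 0)^k"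
    using nonneg pos T0 unfolding M_def by (intro log_convex_ge_geometric) auto
  moreover have "(M * rayleigh n a x)\<^sup>2 \<le> M * T 1"
  proof -
    have "M * rayleigh n a x = (\<Sum>i<n. mpow_vec n a 0 x i * mpow_vec n a 1 x i)"
      using pos unfolding rayleigh_def M_def by (simp add: mpow_vec_zero mpow_vec_Suc[where k=0])
    then show ?thesis using Cauchy_Schwarz_sum[of "{..<n}" "mpow_vec n a 0 x" "mpow_vec n a 1 x"]
      unfolding T_def M_def by (simp add: mpow_vec_zero)
  qed
  then have "rayleigh n a x ^ 2 \<le> T 1 / M"
    using pos unfolding M_def by (simp add: power2_eq_square field_simps)
  then have "rayleigh n a x ^ (2 * k) \<le> (T 1 / M)^k"
    by (simp add: power_mult power_mono)
  ultimately show ?thesis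
    using pos T0 unfolding M_def T_def by (smt (verit) mult_left_mono)
qed

end

locale signed_matrix =
  fixes a :: "nat \<Rightarrow> nat \<Rightarrow> real" and sg :: "nat \<Rightarrow> real"
  assumes sign_square: "sg i * sg i = 1"
    and sign_flip: "sg i * a i j * sg j = - a i j"
begin

lemma mpow_sign: "sg i * mpow n a k i j * sg j = (-1)^k * mpow n a k i j"
proof (induct k arbitrary: j)
  case 0
  then show ?case using sign_square by auto
next
  case (Suc k)
  have "sg i * mpow n a (Suc k) i j * sg j = (\<Sum>l<n. (sg i * mpow n a k i l * sg l) * (sg l * a l j * sg j))"
    by (simp add: sum_distrib_left sum_distrib_right)
       (intro sum.cong refl, simp add: mult.assoc[symmetric], simp add: mult.assoc sign_square)
  also have "\<dots> = (\<Sum>l<n. (-1)^(Suc k) * (mpow n a k i l * a l j))"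
    by (intro sum.cong refl) (simp only: Suc sign_flip, simp)
  finally show ?case by (simp add: sum_distrib_left)
qed

lemma mpow_odd_diag:
  assumes "odd k"
  shows "mpow n a k i i = 0"
proof -
  have "mpow n a k i i = sg i * mpow n a k i i * sg i"
    using sign_square[of i] by (simp add: algebra_simps)
  also have "\<dots> = - mpow n a k i i" using \<open>odd k\<close> by (simp add: mpow_sign)
  finally show ?thesis by simp
qed

lemma mpow_vec_sign:
  "mpow_vec n a k (\<lambda>l. sg l * x l) i = (-1)^k * sg i * mpow_vec n a k x i"
proof -
  have "mpow n a k i l * sg l = (-1)^k * sg i * mpow n a k i l" for l
  proof -
    have "mpow n a k i l * sg l = sg i * (sg i * mpow n a k i l * sg l)"
      using sign_square[of i] by (simp add: algebra_simps)
    also have "\<dots> = sg i * ((-1)^k * mpow n a k i l)" by (simp only: mpow_sign)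
    finally show ?thesis by (simp add: mult_ac)
  qed
  then show ?thesis
    unfolding mpow_vec_def sum_distrib_left by (intro sum.cong refl) (simp add: mult.assoc[symmetric])
qed

lemma square_mpow_vec_sign:
  "(mpow_vec n a k (\<lambda>l. sg l * x l) i)\<^sup>2 = (mpow_vec n a k x i)\<^sup>2"
proof -
  have "((-1::real)^k)\<^sup>2 = 1" by (cases "even k") auto
  moreover have "(mpow_vec n a k (\<lambda>l. sg l * x l) i)\<^sup>2
      = ((-1)^k)\<^sup>2 * (sg i * sg i) * (mpow_vec n a k x i)\<^sup>2"
    by (simp add: mpow_vec_sign power2_eq_square algebra_simps)
  ultimately show ?thesis using sign_square[of i] by simp
qed

end

locale bipartite_matrix = symmetric_matrix a + signed_matrix a sg
  for a :: "nat \<Rightarrow> nat \<Rightarrow> real" and sg :: "nat \<Rightarrow> real"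
begin

text \<open>Row \<open>i\<close> of \<open>A\<^sup>k\<close> has the same squared projection onto the sign-flipped copy
  \<open>y\<close> of \<open>x\<close> as onto \<open>x\<close>, so Bessel's inequality for the orthogonal pair \<open>x, y\<close> loses
  exactly the displayed sum of squares.\<close>
lemma trace_mpow_double_gap:
  assumes xx: "(\<Sum>l<n. (x l)\<^sup>2) = M" and xy: "(\<Sum>l<n. x l * (sg l * x l)) = 0" and M: "M > 0"
  shows "M * (\<Sum>i<n. mpow n a (k + k) i i) - 2 * (\<Sum>i<n. (mpow_vec n a k x i)\<^sup>2) =
    (\<Sum>i<n. (\<Sum>l<n. (M * mpow n a k i l - mpow_vec n a k x i * x l
        - mpow_vec n a k (\<lambda>l. sg l * x l) i * (sg l * x l))\<^sup>2) / M)"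
proof -
  have "(sg l * x l)\<^sup>2 = (sg l * sg l) * (x l)\<^sup>2" for l by (simp add: power2_eq_square mult_ac)
  then have yy: "(\<Sum>l<n. (sg l * x l)\<^sup>2) = M" using xx sign_square by simp
  have "M * (\<Sum>i<n. mpow n a (k + k) i i) - 2 * (\<Sum>i<n. (mpow_vec n a k x i)\<^sup>2)
     = (\<Sum>i<n. M * (\<Sum>l<n. (mpow n a k i l)\<^sup>2) - (mpow_vec n a k x i)\<^sup>2
          - (mpow_vec n a k (\<lambda>l. sg l * x l) i)\<^sup>2)"
    by (simp add: trace_mpow_double square_mpow_vec_sign sum_distrib_left sum_subtractf)
  also have "\<dots> = (\<Sum>i<n. (\<Sum>l<n. (M * mpow n a k i l - mpow_vec n a k x i * x l
        - mpow_vec n a k (\<lambda>l. sg l * x l) i * (sg l * x l))\<^sup>2) / M)"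
    unfolding mpow_vec_def by (intro sum.cong refl sum_square_minus_two_projections[OF xx yy xy M])
  finally show ?thesis .
qed

lemma trace_mpow_double_ge:
  assumes xy: "(\<Sum>l<n. x l * (sg l * x l)) = 0" and pos: "(\<Sum>l<n. (x l)\<^sup>2) > 0"
  shows "(\<Sum>i<n. mpow n a (k + k) i i) \<ge> 2 * rayleigh n a x ^ (2 * k)"
proof -
  define M where "M = (\<Sum>l<n. (x l)\<^sup>2)"
  have M: "M > 0" using pos unfolding M_def .
  have "M * (\<Sum>i<n. mpow n a (k + k) i i) - 2 * (\<Sum>i<n. (mpow_vec n a k x i)\<^sup>2) \<ge> 0"
    unfolding trace_mpow_double_gap[OF M_def[symmetric] xy M] using M
    by (intro sum_nonneg divide_nonneg_pos) auto
  moreover have "(\<Sum>i<n. (mpow_vec n a k x i)\<^sup>2) \<ge> M * rayleigh n a x ^ (2 * k)"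
    unfolding M_def by (rule norm_mpow_vec_ge[OF pos])
  ultimately have "M * (\<Sum>i<n. mpow n a (k + k) i i) \<ge> M * (2 * rayleigh n a x ^ (2 * k))" by simp
  then show ?thesis using M by simp
qed

lemma trace_mpow_two_eq_imp_rank_two:
  assumes xy: "(\<Sum>l<n. x l * (sg l * x l)) = 0" and pos: "(\<Sum>l<n. (x l)\<^sup>2) > 0"
    and eq: "(\<Sum>i<n. mpow n a 2 i i) = 2 * rayleigh n a x ^ 2"
    and i: "i < n" and l: "l < n"
  shows "(\<Sum>j<n. (x j)\<^sup>2) * a i l = (\<Sum>j<n. a i j * x j) * x l + (\<Sum>j<n. a i j * (sg j * x j)) * (sg l * x l)"
proof -
  define M where "M = (\<Sum>l<n. (x l)\<^sup>2)"
  have M: "M > 0" using pos unfolding M_def .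
  define D where "D i l = M * mpow n a 1 i l - mpow_vec n a 1 x i * x l
        - mpow_vec n a 1 (\<lambda>l. sg l * x l) i * (sg l * x l)" for i l
  define G where "G i = (\<Sum>l<n. (D i l)\<^sup>2) / M" for i
  have G_nonneg: "G i \<ge> 0" for i unfolding G_def using M by (intro sum_nonneg divide_nonneg_pos) auto
  have "M * (\<Sum>i<n. mpow n a (1 + 1) i i) - 2 * (\<Sum>i<n. (mpow_vec n a 1 x i)\<^sup>2) = (\<Sum>i<n. G i)"
    unfolding G_def D_def by (rule trace_mpow_double_gap[OF M_def[symmetric] xy M])
  moreover have "(\<Sum>i<n. (mpow_vec n a 1 x i)\<^sup>2) \<ge> M * rayleigh n a x ^ 2"
    using norm_mpow_vec_ge[OF pos, of 1] unfolding M_def by simp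
  ultimately have "(\<Sum>i<n. G i) \<le> 0" using eq by (simp add: numeral_2_eq_2)
  then have "(\<Sum>i<n. G i) = 0" using G_nonneg by (intro order_antisym sum_nonneg) auto
  then have "G i = 0" using G_nonneg i by (simp add: sum_nonneg_eq_0_iff)
  then have "(\<Sum>l<n. (D i l)\<^sup>2) = 0" unfolding G_def using M by simp
  then have "D i l = 0" using l by (simp add: sum_nonneg_eq_0_iff)
  moreover have "mpow n a 1 i = a i" by (rule ext, rule mpow_one[OF i])
  ultimately show ?thesis unfolding D_def mpow_vec_def M_def by (simp del: mpow.simps)
qed

end

definition adj :: "(nat \<Rightarrow> nat \<Rightarrow> bool) \<Rightarrow> nat \<Rightarrow> nat \<Rightarrow> real" where
  "adj E i j = (if E i j then 1 else 0)"

definition sqrt_degree :: "nat \<Rightarrow> (nat \<Rightarrow> nat \<Rightarrow> bool) \<Rightarrow> nat \<Rightarrow> real" where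
  "sqrt_degree n E i = sqrt (real (degree n E i))"

definition side_sign :: "nat set \<Rightarrow> nat \<Rightarrow> real" where
  "side_sign S i = (if i \<in> S then -1 else 1)"

lemma adj_mat_carrier: "adj_mat n E \<in> carrier_mat n n"
  unfolding adj_mat_def by simp

lemma adj_mat_index: "i < n \<Longrightarrow> j < n \<Longrightarrow> adj_mat n E $$ (i,j) = adj E i j"
  unfolding adj_mat_def adj_def by simp

lemma adj_mat_pow_index:
  "i < n \<Longrightarrow> j < n \<Longrightarrow> (adj_mat n E ^\<^sub>m k) $$ (i,j) = mpow n (adj E) k i j"
proof (induct k arbitrary: j)
  case 0
  then show ?case using adj_mat_carrier[of n E] by auto
next
  case (Suc k)
  have "adj_mat n E ^\<^sub>m k \<in> carrier_mat n n" using adj_mat_carrier by simp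
  then have "(adj_mat n E ^\<^sub>m Suc k) $$ (i,j) = (\<Sum>l<n. (adj_mat n E ^\<^sub>m k) $$ (i,l) * adj_mat n E $$ (l,j))"
    using Suc.prems by (simp del: index_mult_mat add: index_mult_mat_sum[OF _ adj_mat_carrier])
  also have "\<dots> = mpow n (adj E) (Suc k) i j"
    using Suc by (simp del: index_mult_mat add: adj_mat_index)
  finally show ?case .
qed

lemma simple_graph_adj_symmetric: "simple_graph n E \<Longrightarrow> symmetric_matrix (adj E)"
  unfolding simple_graph_def adj_def by unfold_locales metis

lemma bipartite_matrix_adj:
  assumes "simple_graph n E" and "\<forall>i j. E i j \<longrightarrow> (i \<in> S \<longleftrightarrow> j \<notin> S)"
  shows "bipartite_matrix (adj E) (side_sign S)"
proof -
  interpret symmetric_matrix "adj E" using simple_graph_adj_symmetric[OF assms(1)] .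
  show ?thesis using assms(2) by unfold_locales (auto simp: side_sign_def adj_def)
qed

lemma degree_eq_sum_adj: "real (degree n E i) = (\<Sum>j<n. adj E i j)"
proof -
  have "(\<Sum>j<n. adj E i j) = real (card ({..<n} \<inter> Collect (E i)))"
    unfolding adj_def by (simp add: sum.If_cases)
  also have "{..<n} \<inter> Collect (E i) = {j. j < n \<and> E i j}" by auto
  finally show ?thesis unfolding degree_def by simp
qed

lemma degree_pos_iff: "degree n E i > 0 \<longleftrightarrow> (\<exists>j<n. E i j)"
  unfolding degree_def by (auto simp: card_gt_0_iff)

lemma finite_edge_set: "finite (edge_set n E)"
  by (rule finite_subset[of _ "{..<n} \<times> {..<n}"]) (auto simp: edge_set_def)

lemma sum_adj_eq_sum_edges:
  fixes f :: "nat \<Rightarrow> nat \<Rightarrow> real"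
  assumes G: "simple_graph n E" and f_sym: "\<And>i j. f i j = f j i"
  shows "(\<Sum>i<n. \<Sum>j<n. adj E i j * f i j) = 2 * (\<Sum>(i,j)\<in>edge_set n E. f i j)"
proof -
  have E: "E i j \<Longrightarrow> i < n \<and> j < n" "E i j \<Longrightarrow> E j i" "\<not> E i i" for i j
    using G unfolding simple_graph_def by blast+
  define swap where "swap = (\<lambda>(i::nat, j::nat). (j, i))"
  have arcs: "{p\<in>{..<n}\<times>{..<n}. E (fst p) (snd p)} = edge_set n E \<union> swap ` edge_set n E"
    unfolding edge_set_def swap_def using E by (auto simp: image_iff) (metis linorder_neqE_nat)
  have "(\<Sum>i<n. \<Sum>j<n. adj E i j * f i j) = (\<Sum>p\<in>{..<n}\<times>{..<n}. adj E (fst p) (snd p) * f (fst p) (snd p))"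
    by (simp add: sum.cartesian_product case_prod_beta)
  also have "\<dots> = (\<Sum>p\<in>{p\<in>{..<n}\<times>{..<n}. E (fst p) (snd p)}. f (fst p) (snd p))"
    unfolding adj_def by (subst sum.inter_filter) (auto intro!: sum.cong)
  also have "\<dots> = (\<Sum>p\<in>edge_set n E. f (fst p) (snd p)) + (\<Sum>p\<in>swap ` edge_set n E. f (fst p) (snd p))"
    unfolding arcs using finite_edge_set[of n E]
    by (intro sum.union_disjoint) (auto simp: edge_set_def swap_def)
  also have "(\<Sum>p\<in>swap ` edge_set n E. f (fst p) (snd p)) = (\<Sum>p\<in>edge_set n E. f (snd p) (fst p))"
    by (rule sum.reindex_cong[of swap]) (auto simp: inj_on_def swap_def)
  also have "\<dots> = (\<Sum>p\<in>edge_set n E. f (fst p) (snd p))" by (simp add: f_sym)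
  finally show ?thesis by (simp add: case_prod_beta')
qed

lemma sum_degree_eq_twice_num_edges:
  "simple_graph n E \<Longrightarrow> (\<Sum>i<n. real (degree n E i)) = 2 * real (num_edges n E)"
  using sum_adj_eq_sum_edges[of n E "\<lambda>_ _. 1"]
  unfolding degree_eq_sum_adj num_edges_def by simp

lemma sum_sqrt_degree_square:
  "simple_graph n E \<Longrightarrow> (\<Sum>i<n. (sqrt_degree n E i)\<^sup>2) = 2 * real (num_edges n E)"
  unfolding sqrt_degree_def by (simp add: sum_degree_eq_twice_num_edges)

lemma sqrt_degree_quadratic_form:
  assumes "simple_graph n E"
  shows "(\<Sum>i<n. sqrt_degree n E i * (\<Sum>l<n. adj E i l * sqrt_degree n E l)) = 2 * R_half n E"
proof -
  have "(\<Sum>i<n. sqrt_degree n E i * (\<Sum>l<n. adj E i l * sqrt_degree n E l))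
      = (\<Sum>i<n. \<Sum>l<n. adj E i l * (sqrt_degree n E i * sqrt_degree n E l))"
    by (simp add: sum_distrib_left mult_ac)
  also have "\<dots> = 2 * (\<Sum>(i,j)\<in>edge_set n E. sqrt_degree n E i * sqrt_degree n E j)"
    by (rule sum_adj_eq_sum_edges[OF assms]) simp
  also have "(\<Sum>(i,j)\<in>edge_set n E. sqrt_degree n E i * sqrt_degree n E j) = R_half n E"
    unfolding R_half_def sqrt_degree_def by (simp add: real_sqrt_mult)
  finally show ?thesis .
qed

lemma rayleigh_sqrt_degree:
  "simple_graph n E \<Longrightarrow> num_edges n E \<ge> 1
    \<Longrightarrow> rayleigh n (adj E) (sqrt_degree n E) = R_half n E / real (num_edges n E)"
  unfolding rayleigh_def by (simp add: sqrt_degree_quadratic_form sum_sqrt_degree_square)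

text \<open>In a bipartite graph both sides carry half of the degree sum, so \<open>\<surd>d\<close> is orthogonal
  to its sign-flipped copy.\<close>
lemma sqrt_degree_side_sign_orthogonal:
  assumes G: "simple_graph n E" and S: "\<forall>i j. E i j \<longrightarrow> (i \<in> S \<longleftrightarrow> j \<notin> S)"
  shows "(\<Sum>l<n. sqrt_degree n E l * (side_sign S l * sqrt_degree n E l)) = 0"
proof -
  interpret bipartite_matrix "adj E" "side_sign S" by (rule bipartite_matrix_adj[OF G S])
  define Z where "Z = (\<Sum>l<n. \<Sum>j<n. adj E l j * side_sign S l)"
  have "(\<Sum>l<n. sqrt_degree n E l * (side_sign S l * sqrt_degree n E l)) = (\<Sum>l<n. side_sign S l * real (degree n E l))"
    unfolding sqrt_degree_def by (intro sum.cong refl) (simp add: mult.left_commute[of "sqrt _"] flip: power2_eq_square)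
  also have "\<dots> = Z" unfolding Z_def degree_eq_sum_adj by (simp add: sum_distrib_left mult.commute)
  finally have "(\<Sum>l<n. sqrt_degree n E l * (side_sign S l * sqrt_degree n E l)) = Z" .
  moreover have "Z = - Z"
  proof -
    have "Z = (\<Sum>j<n. \<Sum>l<n. adj E l j * side_sign S l)" unfolding Z_def by (rule sum.swap)
    also have "\<dots> = (\<Sum>j<n. \<Sum>l<n. - (adj E j l * side_sign S j))"
    proof (intro sum.cong refl)
      fix j l
      have "side_sign S l * adj E l j * side_sign S j = - adj E l j" by (rule sign_flip)
      then have "adj E l j * side_sign S l = - (adj E l j * side_sign S j)"
        unfolding side_sign_def by (auto split: if_splits)
      then show "adj E l j * side_sign S l = - (adj E j l * side_sign S j)" by (simp add: symmetric[of l j])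
    qed
    finally show ?thesis unfolding Z_def by (simp add: sum_negf)
  qed
  ultimately show ?thesis by simp
qed

lemma sum_adj_sqrt_degree_pos:
  assumes G: "simple_graph n E" and "degree n E i > 0"
  shows "(\<Sum>l<n. adj E i l * sqrt_degree n E l) > 0"
proof -
  obtain j where j: "j < n" "E i j" using assms(2) by (auto simp: degree_pos_iff)
  moreover have "E j i" "i < n" using G j unfolding simple_graph_def by blast+
  ultimately have "degree n E j > 0" by (auto simp: degree_pos_iff)
  then have "0 < adj E i j * sqrt_degree n E j" using j by (simp add: adj_def sqrt_degree_def)
  also have "\<dots> \<le> (\<Sum>l<n. adj E i l * sqrt_degree n E l)"
    by (rule member_le_sum) (use j in \<open>auto simp: adj_def sqrt_degree_def\<close>)
  finally show ?thesis .
qed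

section \<open>Traces of powers of the adjacency matrix\<close>

text \<open>The trace of \<open>A\<^sup>k\<close> for \<open>K\<^sub>p\<^sub>,\<^sub>q \<union> (n-p-q)K\<^sub>1\<close>, with \<open>\<rho> = \<surd>(pq)\<close> and \<open>r = n - 2\<close>.\<close>
definition extremal_trace :: "real \<Rightarrow> real \<Rightarrow> nat \<Rightarrow> real" where
  "extremal_trace \<rho> r k = \<rho>^k + (-\<rho>)^k + (if k = 0 then r else 0)"

lemma extremal_trace_sums: "(\<lambda>k. extremal_trace \<rho> r k / fact k) sums (2 * cosh \<rho> + r)"
proof -
  have "(\<lambda>k. (if k = 0 then r else 0) / fact k) = (\<lambda>k. if k = 0 then r else 0)" by auto
  then have "(\<lambda>k. (if k = 0 then r else 0) / fact k) sums r" using sums_single[of 0 "\<lambda>_. r"] by simp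
  from sums_add[OF sums_add[OF exp_sums exp_sums] this]
  show ?thesis by (simp add: extremal_trace_def add_divide_distrib cosh_def)
qed

lemma estrada_index_sums:
  assumes G: "simple_graph n E"
  shows "(\<lambda>k. (\<Sum>i<n. mpow n (adj E) k i i) / fact k) sums estrada_index n E"
proof -
  interpret symmetric_matrix "adj E" by (rule simple_graph_adj_symmetric[OF G])
  have "\<exists>es. char_poly (adj_mat n E) = (\<Prod>a\<leftarrow>es. [:- a, 1:])"
    by (rule real_symmetric_char_poly_splits[OF adj_mat_carrier]) (simp add: adj_mat_index symmetric)
  text \<open>Whichever root list the definition picks, its power sums are the traces of \<open>A\<^sup>k\<close>.\<close>
  then have "\<exists>es :: real list. char_poly (adj_mat n E) = (\<Prod>a\<leftarrow>es. [:- a, 1:])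
      \<and> estrada_index n E = (\<Sum>a\<leftarrow>es. exp a)"
    unfolding estrada_index_def by (intro someI_ex[where P = "\<lambda>s. \<exists>es. _ es \<and> s = _ es"]) blast
  then obtain es where cp: "char_poly (adj_mat n E) = (\<Prod>a\<leftarrow>es. [:- a, 1:])"
    and ee: "estrada_index n E = (\<Sum>a\<leftarrow>es. exp a)" by blast
  have "(\<Sum>e\<leftarrow>es. e^k) = (\<Sum>i<n. mpow n (adj E) k i i)" for k
    using power_sum_eigenvalues_eq_trace[OF adj_mat_carrier cp] by (simp add: adj_mat_pow_index)
  then show ?thesis using exp_power_sums_sums[of es] unfolding ee by simp
qed

lemma trace_adj_pow_ge:
  assumes G: "simple_graph n E" and S: "\<forall>i j. E i j \<longrightarrow> (i \<in> S \<longleftrightarrow> j \<notin> S)"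
    and m: "num_edges n E \<ge> 1"
  shows "extremal_trace (R_half n E / real (num_edges n E)) (real n - 2) k \<le> (\<Sum>i<n. mpow n (adj E) k i i)"
proof -
  interpret bipartite_matrix "adj E" "side_sign S" by (rule bipartite_matrix_adj[OF G S])
  define \<rho> where "\<rho> = R_half n E / real (num_edges n E)"
  show ?thesis
  proof (cases "odd k")
    case True
    then have "k \<noteq> 0" by (intro notI) simp
    with True show ?thesis by (simp add: extremal_trace_def mpow_odd_diag)
  next
    case False
    then obtain j where k: "k = j + j" by (auto elim!: evenE simp: mult_2)
    show ?thesis
    proof (cases "j = 0")
      case True
      then show ?thesis using k by (simp add: extremal_trace_def)
    next
      case False
      have pos: "(\<Sum>l<n. (sqrt_degree n E l)\<^sup>2) > 0"
        using m by (simp add: sum_sqrt_degree_square[OF G])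
      have "2 * \<rho> ^ (2 * j) \<le> (\<Sum>i<n. mpow n (adj E) k i i)"
        using trace_mpow_double_ge[OF sqrt_degree_side_sign_orthogonal[OF G S] pos, of j]
        unfolding \<rho>_def k rayleigh_sqrt_degree[OF G m] .
      moreover have "extremal_trace \<rho> (real n - 2) k = 2 * \<rho> ^ (2 * j)"
        using k False by (simp add: extremal_trace_def flip: mult_2)
      ultimately show ?thesis unfolding \<rho>_def by simp
    qed
  qed
qed

section \<open>The equality case\<close>

lemma rank_two_adj_imp_complete_bipartite:
  assumes G: "simple_graph n E" and S: "\<forall>i j. E i j \<longrightarrow> (i \<in> S \<longleftrightarrow> j \<notin> S)"
    and m: "num_edges n E \<ge> 1"
    and rank_two: "\<And>i l. i < n \<Longrightarrow> l < n \<Longrightarrow> (\<Sum>j<n. (sqrt_degree n E j)\<^sup>2) * adj E i l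
      = (\<Sum>j<n. adj E i j * sqrt_degree n E j) * sqrt_degree n E l
      + (\<Sum>j<n. adj E i j * (side_sign S j * sqrt_degree n E j)) * (side_sign S l * sqrt_degree n E l)"
  shows "complete_bipartite_plus_isolated n E"
proof -
  have E: "E i j \<Longrightarrow> i < n \<and> j < n" "E i j \<Longrightarrow> E j i" for i j
    using G unfolding simple_graph_def by blast+
  have active: "degree n E i > 0" "degree n E j > 0" if "E i j" for i j
    using that E[of i j] E[of j i] unfolding degree_pos_iff by blast+
  define M where "M = (\<Sum>j<n. (sqrt_degree n E j)\<^sup>2)"
  define w where "w i = (\<Sum>l<n. adj E i l * sqrt_degree n E l)" for i
  have "(\<Sum>j<n. adj E i j * (side_sign S j * sqrt_degree n E j)) = - side_sign S i * w i" for i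
    unfolding w_def sum_distrib_left by (intro sum.cong refl) (use S in \<open>auto simp: adj_def side_sign_def\<close>)
  then have key: "M * adj E i l = w i * sqrt_degree n E l * (1 - side_sign S i * side_sign S l)"
    if "i < n" "l < n" for i l
    using rank_two[OF that] unfolding M_def[symmetric] w_def[symmetric] by (simp add: algebra_simps)
  have sqrt_pos: "sqrt_degree n E l > 0" if "degree n E l > 0" for l
    using that unfolding sqrt_degree_def by simp
  have w_pos: "w i > 0" if "degree n E i > 0" for i
    unfolding w_def using sum_adj_sqrt_degree_pos[OF G that] .
  define P where "P = {i. i < n \<and> i \<in> S \<and> degree n E i > 0}"
  define Q where "Q = {i. i < n \<and> i \<notin> S \<and> degree n E i > 0}"
  text \<open>A vertex in \<open>P\<close> and one in \<open>Q\<close> have opposite signs, so the right-hand side of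
    \<open>key\<close> is positive and the pair must be an edge.\<close>
  have cross_edge: "E i j" if "i \<in> P" "j \<in> Q" for i j
  proof -
    have "M * adj E i j = w i * sqrt_degree n E j * 2"
      using key[of i j] that unfolding P_def Q_def by (simp add: side_sign_def)
    moreover have "w i * sqrt_degree n E j * 2 > 0"
      using that w_pos sqrt_pos unfolding P_def Q_def by simp
    ultimately show ?thesis by (auto simp: adj_def split: if_splits)
  qed
  have edge_iff: "E i j \<longleftrightarrow> (i \<in> P \<and> j \<in> Q) \<or> (i \<in> Q \<and> j \<in> P)" for i j
    using cross_edge E active S unfolding P_def Q_def by blast
  obtain a b where "(a, b) \<in> edge_set n E"
    using m unfolding num_edges_def by (metis card.empty ex_in_conv not_one_le_zero surj_pair)
  then have "P \<noteq> {}" "Q \<noteq> {}" using edge_iff[of a b] unfolding edge_set_def by auto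
  moreover have "P \<subseteq> {0..<n}" "Q \<subseteq> {0..<n}" "P \<inter> Q = {}" unfolding P_def Q_def by auto
  moreover from this have "finite P" "finite Q" by (auto intro: finite_subset)
  ultimately show ?thesis unfolding complete_bipartite_plus_isolated_def
    using edge_iff by (intro exI[of _ P] exI[of _ Q]) (auto simp: Suc_le_eq card_gt_0_iff)
qed

lemma complete_bipartite_if_trace_two_eq:
  assumes G: "simple_graph n E" and S: "\<forall>i j. E i j \<longrightarrow> (i \<in> S \<longleftrightarrow> j \<notin> S)"
    and m: "num_edges n E \<ge> 1"
    and eq: "(\<Sum>i<n. mpow n (adj E) 2 i i) = extremal_trace (R_half n E / real (num_edges n E)) (real n - 2) 2"
  shows "complete_bipartite_plus_isolated n E"
proof -
  interpret bipartite_matrix "adj E" "side_sign S" by (rule bipartite_matrix_adj[OF G S])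
  have pos: "(\<Sum>l<n. (sqrt_degree n E l)\<^sup>2) > 0"
    using m by (simp add: sum_sqrt_degree_square[OF G])
  have "(\<Sum>i<n. mpow n (adj E) 2 i i) = 2 * rayleigh n (adj E) (sqrt_degree n E) ^ 2"
    using eq by (simp add: extremal_trace_def rayleigh_sqrt_degree[OF G m])
  then show ?thesis
    using trace_mpow_two_eq_imp_rank_two[OF sqrt_degree_side_sign_orthogonal[OF G S] pos]
    by (intro rank_two_adj_imp_complete_bipartite[OF G S m])
qed

locale complete_bipartite =
  fixes n :: nat and E :: "nat \<Rightarrow> nat \<Rightarrow> bool" and P Q :: "nat set"
  assumes P_subset: "P \<subseteq> {0..<n}" and Q_subset: "Q \<subseteq> {0..<n}" and disjoint: "P \<inter> Q = {}"
    and edge_iff: "E i j \<longleftrightarrow> (i \<in> P \<and> j \<in> Q) \<or> (i \<in> Q \<and> j \<in> P)"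
begin

abbreviation "p \<equiv> real (card P)"
abbreviation "q \<equiv> real (card Q)"

lemma simple_graph: "simple_graph n E"
  using P_subset Q_subset disjoint unfolding simple_graph_def edge_iff by auto

lemma adj_eq: "adj E i j = of_bool (i \<in> P) * of_bool (j \<in> Q) + of_bool (i \<in> Q) * of_bool (j \<in> P)"
  using disjoint by (auto simp: adj_def edge_iff)

lemma lessThan_inter_P [simp]: "{..<n} \<inter> P = P"
  using P_subset by auto

lemma lessThan_inter_Q [simp]: "{..<n} \<inter> Q = Q"
  using Q_subset by auto

lemma sum_of_bool_sides: "(\<Sum>l<n. \<alpha> * of_bool (l \<in> P) + \<beta> * of_bool (l \<in> Q)) = \<alpha> * p + \<beta> * q"
  by (simp add: sum.distrib sum_distrib_left[symmetric])

lemma degree_eq: "real (degree n E i) = of_bool (i \<in> Q) * p + of_bool (i \<in> P) * q"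
  unfolding degree_eq_sum_adj adj_eq by (simp add: sum_of_bool_sides mult.commute)

lemma mpow_two:
  assumes "i < n" "j < n"
  shows "mpow n (adj E) 2 i j = of_bool (i \<in> Q) * of_bool (j \<in> Q) * p + of_bool (i \<in> P) * of_bool (j \<in> P) * q"
proof -
  have "mpow n (adj E) 2 i j = (\<Sum>l<n. adj E i l * adj E l j)"
    using mpow_add[of j n "adj E" 1 1 i] assms
    by (simp add: mpow_one[unfolded One_nat_def] numeral_2_eq_2 del: mpow.simps)
  also have "\<dots> = (\<Sum>l<n. of_bool (i \<in> Q) * of_bool (j \<in> Q) * of_bool (l \<in> P)
      + of_bool (i \<in> P) * of_bool (j \<in> P) * of_bool (l \<in> Q))"
    using disjoint by (intro sum.cong refl) (auto simp: adj_eq)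
  finally show ?thesis by (simp only: sum_of_bool_sides)
qed

lemma mpow_three:
  assumes "i < n" "j < n"
  shows "mpow n (adj E) 3 i j = p * q * adj E i j"
proof -
  have "mpow n (adj E) 3 i j = (\<Sum>l<n. mpow n (adj E) 2 i l * adj E l j)"
    using mpow_add[of j n "adj E" 2 1 i] assms
    by (simp add: mpow_one[unfolded One_nat_def] numeral_3_eq_3 del: mpow.simps)
  also have "\<dots> = (\<Sum>l<n. q * of_bool (i \<in> P) * of_bool (j \<in> Q) * of_bool (l \<in> P)
      + p * of_bool (i \<in> Q) * of_bool (j \<in> P) * of_bool (l \<in> Q))"
    using disjoint assms by (intro sum.cong refl) (auto simp: adj_eq mpow_two)
  also have "\<dots> = p * q * adj E i j" by (simp only: sum_of_bool_sides) (simp add: adj_eq algebra_simps)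
  finally show ?thesis .
qed

lemma trace_mpow_two: "(\<Sum>i<n. mpow n (adj E) 2 i i) = 2 * (p * q)"
proof -
  have "(\<Sum>i<n. mpow n (adj E) 2 i i) = (\<Sum>i<n. q * of_bool (i \<in> P) + p * of_bool (i \<in> Q))"
    by (intro sum.cong refl) (auto simp: mpow_two)
  then show ?thesis by (simp add: sum_of_bool_sides)
qed

lemma R_half_eq: "R_half n E = real (num_edges n E) * sqrt (p * q)"
proof -
  have edge_weight: "adj E i l * (sqrt_degree n E i * sqrt_degree n E l) = adj E i l * sqrt (p * q)" for i l
    unfolding sqrt_degree_def degree_eq using disjoint by (auto simp: adj_eq real_sqrt_mult)
  have "(\<Sum>i<n. \<Sum>l<n. adj E i l * (sqrt_degree n E i * sqrt_degree n E l))
      = (\<Sum>i<n. \<Sum>l<n. adj E i l) * sqrt (p * q)"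
    unfolding edge_weight by (simp only: sum_distrib_right)
  moreover have "(\<Sum>i<n. \<Sum>l<n. adj E i l * (sqrt_degree n E i * sqrt_degree n E l)) = 2 * R_half n E"
    unfolding sqrt_degree_quadratic_form[OF simple_graph, symmetric]
    by (simp add: sum_distrib_left mult_ac)
  ultimately have "2 * R_half n E = (\<Sum>i<n. \<Sum>l<n. adj E i l) * sqrt (p * q)" by simp
  also have "(\<Sum>i<n. \<Sum>l<n. adj E i l) = 2 * real (num_edges n E)"
    using sum_degree_eq_twice_num_edges[OF simple_graph] by (simp add: degree_eq_sum_adj)
  finally show ?thesis by simp
qed

lemma trace_mpow_even: "(\<Sum>i<n. mpow n (adj E) (2 * t + 2) i i) = 2 * (p * q)^(t + 1)"
proof (induct t)
  case 0
  then show ?case using trace_mpow_two by (simp add: numeral_2_eq_2 del: mpow.simps)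
next
  case (Suc t)
  have "mpow n (adj E) (2 * Suc t + 2) i i = p * q * mpow n (adj E) (2 * t + 2) i i" if "i < n" for i
  proof -
    have "2 * Suc t + 2 = (2 * t + 1) + 3" "Suc (2 * t + 1) = 2 * t + 2" by simp_all
    then show ?thesis using mpow_add_three[OF mpow_three that, where k = "2 * t + 1" and i = i] by (simp only:)
  qed
  then have "(\<Sum>i<n. mpow n (adj E) (2 * Suc t + 2) i i) = p * q * (\<Sum>i<n. mpow n (adj E) (2 * t + 2) i i)"
    by (simp add: sum_distrib_left del: mpow.simps)
  then show ?case using Suc by simp
qed

lemma trace_mpow:
  assumes "num_edges n E \<ge> 1"
  shows "(\<Sum>i<n. mpow n (adj E) k i i) = extremal_trace (R_half n E / real (num_edges n E)) (real n - 2) k"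
proof -
  interpret bipartite_matrix "adj E" "side_sign P"
    using disjoint by (intro bipartite_matrix_adj[OF simple_graph]) (auto simp: edge_iff)
  define \<rho> where "\<rho> = sqrt (p * q)"
  have \<rho>: "R_half n E / real (num_edges n E) = \<rho>" using assms by (simp add: R_half_eq \<rho>_def)
  show ?thesis
  proof (cases "odd k")
    case True
    then have "k \<noteq> 0" by (intro notI) simp
    with True show ?thesis by (simp add: extremal_trace_def mpow_odd_diag)
  next
    case False
    then obtain j where k: "k = 2 * j" by (auto elim!: evenE)
    show ?thesis
    proof (cases j)
      case 0
      then show ?thesis using k by (simp add: extremal_trace_def)
    next
      case (Suc t)
      then have "k = 2 * t + 2" using k by simp
      moreover have "\<rho> ^ (2 * t + 2) = (p * q)^(t + 1)"
        unfolding \<rho>_def by (simp add: power_mult power_add)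
      ultimately show ?thesis unfolding \<rho> using trace_mpow_even[of t] by (simp add: extremal_trace_def)
    qed
  qed
qed

end

lemma trace_adj_pow_eq_extremal_iff:
  assumes G: "simple_graph n E" and S: "\<forall>i j. E i j \<longrightarrow> (i \<in> S \<longleftrightarrow> j \<notin> S)"
    and m: "num_edges n E \<ge> 1"
  shows "(\<forall>k. (\<Sum>i<n. mpow n (adj E) k i i) = extremal_trace (R_half n E / real (num_edges n E)) (real n - 2) k)
    \<longleftrightarrow> complete_bipartite_plus_isolated n E"
proof
  assume eq: "\<forall>k. (\<Sum>i<n. mpow n (adj E) k i i) = extremal_trace (R_half n E / real (num_edges n E)) (real n - 2) k"
  show "complete_bipartite_plus_isolated n E"
    by (rule complete_bipartite_if_trace_two_eq[OF G S m eq[rule_format]])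
next
  assume "complete_bipartite_plus_isolated n E"
  then obtain P Q where "complete_bipartite n E P Q"
    unfolding complete_bipartite_plus_isolated_def complete_bipartite_def by blast
  from complete_bipartite.trace_mpow[OF this m]
  show "\<forall>k. (\<Sum>i<n. mpow n (adj E) k i i) = extremal_trace (R_half n E / real (num_edges n E)) (real n - 2) k" ..
qed

theorem mainTheorem10:
  fixes n :: nat and E :: "nat \<Rightarrow> nat \<Rightarrow> bool"
  assumes "simple_graph n E" and "bipartite n E" and "num_edges n E \<ge> 1"
  shows "estrada_index n E \<ge> 2 * cosh (R_half n E / real (num_edges n E)) + (real n - 2)
       \<and> (estrada_index n E = 2 * cosh (R_half n E / real (num_edges n E)) + (real n - 2)
           \<longleftrightarrow> complete_bipartite_plus_isolated n E)"
proof -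
  note G = assms(1) and m = assms(3)
  obtain S where S: "\<forall>i j. E i j \<longrightarrow> (i \<in> S \<longleftrightarrow> j \<notin> S)"
    using assms(2) unfolding bipartite_def by blast
  define \<rho> where "\<rho> = R_half n E / real (num_edges n E)"
  define b where "b k = extremal_trace \<rho> (real n - 2) k / fact k" for k
  define c where "c k = (\<Sum>i<n. mpow n (adj E) k i i) / fact k" for k
  have b: "b sums (2 * cosh \<rho> + (real n - 2))" unfolding b_def by (rule extremal_trace_sums)
  have c: "c sums estrada_index n E" unfolding c_def by (rule estrada_index_sums[OF G])
  have le: "b k \<le> c k" for k
    unfolding b_def c_def \<rho>_def by (intro divide_right_mono trace_adj_pow_ge[OF G S m]) simp
  have "b k = c k \<longleftrightarrow> (\<Sum>i<n. mpow n (adj E) k i i) = extremal_trace \<rho> (real n - 2) k" for k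
    unfolding b_def c_def by auto
  then have "(\<forall>k. b k = c k) \<longleftrightarrow> complete_bipartite_plus_isolated n E"
    unfolding \<rho>_def by (simp add: trace_adj_pow_eq_extremal_iff[OF G S m])
  then show ?thesis
    using sums_le[OF le b c] sums_eq_iff_termwise_eq[OF le b c] unfolding \<rho>_def by auto
qed

end
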